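(* Let $F$ be quadratic and assume (A1), (A2). Let $\mathbf C=1$ for \texttt{MCM} and $\mathbf C=N$ for \texttt{Rand-MCM} (as in the context). Then for any $k\ge1$, $$\mathbb{E}\Big[\Big\|\frac1N\sum_{i=1}^N\nabla F(\widehat w^i_{k-1})-\nabla F(w_{k-1})\Big\|^2\,\Big|\,w_{k-1}\Big]\le\frac{L^2\omega_{\mathrm{dwn}}}{\mathbf C}\cdot\frac1N\sum_{i=1}^N\|w_{k-1}-H^i_{k-2}\|^2.$$
   Context: $N\ge1$ homogeneous workers, objective $F:\mathbb{R}^d\to\mathbb{R}$. $F$ is quadratic: there are a symmetric matrix $A$ and a point $w_*$ with $F(w)-F(w_* )=\frac12(w-w_* )^\top A(w-w_* )$. Worker $i$ at iteration $k$ has an oracle $g_k^i$ with $\mathbb{E}[g_k^i(w)]=\nabla F(w)$; all compressions use fresh independent randomness. \texttt{Rand-MCM} with step $\gamma$, rate $\alpha_{\mathrm{dwn}}$: $H^i_{-1}=w_0$, $\widehat w_0^i=w_0$; for $k\ge1$: $w_k=w_{k-1}-\gamma\frac1N\sum_i\mathcal{C}_{\mathrm{up}}(g_k^i(\widehat w^i_{k-1}))$, $\widehat w^i_k=H^i_{k-1}+\mathcal{C}_{\mathrm{dwn},i}(w_k-H^i_{k-1})$, $H^i_k=H^i_{k-1}+\alpha_{\mathrm{dwn}}\mathcal{C}_{\mathrm{dwn},i}(w_k-H^i_{k-1})$ (same realization), with $\mathcal{C}_{\mathrm{dwn},1},\dots,\mathcal{C}_{\mathrm{dwn},N}$ mutually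 independent. \texttt{MCM} is the same with a single shared memory $H_k^i=H_k$ and a single downlink compression shared by all workers, so $\widehat w^i_k=\widehat w_k$ for all $i$. $\mathbb{E}[\cdot\mid w_{k-1}]$ is the conditional expectation given all randomness up to the computation of $w_{k-1}$ (so $H^i_{k-2}$ is measurable). (A1) for some $\omega_{\mathrm{up}},\omega_{\mathrm{dwn}}>0$, all $w$: unbiased compressions with $\mathbb{E}\|\mathcal{C}(w)-w\|^2\le\omega\|w\|^2$ for the respective $\omega$. (A2) $F$ is $L$-smooth. *)

theory Defs
  imports "HOL-Probability.Probability"
begin

text \<open>An unbiased random compression operator with variance parameter omega
  (assumption (A1)): the randomness lives in a probability space M, and
  C s w is the compression of w under the random outcome s.\<close>
definition unbiased_compressor ::
  "'s measure \<Rightarrow> ('s \<Rightarrow> 'a::euclidean_space \<Rightarrow> 'a) \<Rightarrow> real \<Rightarrow> bool" where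
  "unbiased_compressor M C om \<longleftrightarrow>
     prob_space M \<and>
     (\<forall>w. integrable M (\<lambda>s. C s w) \<and>
          (\<integral>s. C s w \<partial>M) = w \<and>
          integrable M (\<lambda>s. (norm (C s w - w))\<^sup>2) \<and>
          (\<integral>s. (norm (C s w - w))\<^sup>2 \<partial>M) \<le> om * (norm w)\<^sup>2)"

definition L_smooth_grad :: "('a::euclidean_space \<Rightarrow> 'a) \<Rightarrow> real \<Rightarrow> bool" where
  "L_smooth_grad g L \<longleftrightarrow> (\<forall>x y. norm (g x - g y) \<le> L * norm (x - y))"

end

(*
  For quadratic F the gradient x \<mapsto> A (x - wstar) is affine, so the average of the
  workers' gradients is the gradient at the average of their points, and L-smoothness
  bounds the error by L times the averaged compression error.  For Rand-MCM these errors
  are independent and centered, so all cross terms vanish in expectation and the second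
  moment of their average is 1/N^2 times the sum of their second moments; this is where
  the factor N is gained.  For MCM every worker sees the same error and smoothness alone
  gives the bound.
*)

theory Submission
  imports Defs
begin

lemma gradient_of_quadratic:
  fixes F :: "'a::euclidean_space \<Rightarrow> real"
  assumes "linear A" "\<And>x y. A x \<bullet> y = x \<bullet> A y"
    and "\<And>v. F v - F c = 1/2 * ((v - c) \<bullet> A (v - c))"
    and "(F has_derivative (\<lambda>h. g \<bullet> h)) (at x)"
  shows "g = A (x - c)"
proof -
  have F_eq: "F = (\<lambda>v. 1/2 * ((v - c) \<bullet> A (v - c)) + F c)"
  proof (rule ext)
    fix v
    show "F v = 1/2 * ((v - c) \<bullet> A (v - c)) + F c"
      by (simp only: assms(3)[symmetric] diff_add_cancel)
  qed
  have shift: "((\<lambda>v. v - c) has_derivative (\<lambda>h. h)) (at x)"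
    by (rule has_derivative_eq_rhs[OF has_derivative_diff[OF has_derivative_ident has_derivative_const]])
      simp
  have "((\<lambda>v. A (v - c)) has_derivative A) (at x)"
    using bounded_linear.has_derivative[OF assms(1)[unfolded linear_conv_bounded_linear] shift] .
  then have "((\<lambda>v. (v - c) \<bullet> A (v - c))
      has_derivative (\<lambda>h. (x - c) \<bullet> A h + h \<bullet> A (x - c))) (at x)"
    by (rule has_derivative_inner[OF shift])
  then have "(F has_derivative (\<lambda>h. 1/2 * ((x - c) \<bullet> A h + h \<bullet> A (x - c)))) (at x)"
    by (subst F_eq,
        rule has_derivative_eq_rhs[OF has_derivative_add[OF has_derivative_mult_right has_derivative_const]])
      simp
  moreover have "(\<lambda>h. 1/2 * ((x - c) \<bullet> A h + h \<bullet> A (x - c))) = (\<lambda>h. A (x - c) \<bullet> h)"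
  proof
    fix h
    have "(x - c) \<bullet> A h = A (x - c) \<bullet> h"
      by (simp add: assms(2))
    then show "1/2 * ((x - c) \<bullet> A h + h \<bullet> A (x - c)) = A (x - c) \<bullet> h"
      by (simp add: inner_commute[of h])
  qed
  ultimately have "(\<lambda>h. g \<bullet> h) = (\<lambda>h. A (x - c) \<bullet> h)"
    using has_derivative_unique[OF assms(4)] by simp
  then show ?thesis
    by (simp add: fun_eq_iff vector_eq_rdot)
qed

lemma average_of_linear_shift:
  assumes "linear A" "finite I" "I \<noteq> {}"
  shows "(1 / real (card I)) *\<^sub>R (\<Sum>i\<in>I. A (x i - c))
    = A ((1 / real (card I)) *\<^sub>R (\<Sum>i\<in>I. x i) - c)"
proof -
  have "(\<Sum>i\<in>I. A (x i - c)) = A (\<Sum>i\<in>I. x i) - real (card I) *\<^sub>R A c"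
    by (simp add: linear_diff[OF assms(1)] linear_sum[OF assms(1)] sum_subtractf sum_constant_scaleR)
  then show ?thesis
    using assms by (simp add: linear_diff linear_scale scaleR_diff_right)
qed

lemma L_smooth_grad_sq:
  assumes "L_smooth_grad g L"
  shows "(norm (g y - g x))\<^sup>2 \<le> L\<^sup>2 * (norm (y - x))\<^sup>2"
proof -
  have "norm (g y - g x) \<le> L * norm (y - x)"
    using assms unfolding L_smooth_grad_def by blast
  then have "(norm (g y - g x))\<^sup>2 \<le> (L * norm (y - x))\<^sup>2"
    by (intro power_mono) auto
  then show ?thesis
    by (simp add: power_mult_distrib)
qed

lemma affine_gradient_average_error:
  assumes "finite I" "I \<noteq> {}" "linear A" "\<And>x. g x = A (x - c)" "L_smooth_grad g L"
  shows "(norm ((1 / real (card I)) *\<^sub>R (\<Sum>i\<in>I. g (w + d i)) - g w))\<^sup>2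
    \<le> (L / real (card I))\<^sup>2 * (norm (\<Sum>i\<in>I. d i))\<^sup>2"
proof -
  define n where "n = real (card I)"
  have "n > 0"
    using assms(1,2) by (simp add: n_def card_gt_0_iff)
  have "(1 / n) *\<^sub>R (\<Sum>i\<in>I. g (w + d i)) = A ((1 / n) *\<^sub>R (\<Sum>i\<in>I. w + d i) - c)"
    unfolding assms(4) n_def by (rule average_of_linear_shift[OF assms(3) assms(1,2)])
  also have "(1 / n) *\<^sub>R (\<Sum>i\<in>I. w + d i) = w + (1 / n) *\<^sub>R (\<Sum>i\<in>I. d i)"
    using \<open>n > 0\<close> by (simp add: sum.distrib sum_constant_scaleR scaleR_add_right n_def)
  finally have "(1 / n) *\<^sub>R (\<Sum>i\<in>I. g (w + d i)) = g (w + (1 / n) *\<^sub>R (\<Sum>i\<in>I. d i))"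
    by (simp add: assms(4))
  then show ?thesis
    using L_smooth_grad_sq[OF assms(5), of "w + (1 / n) *\<^sub>R (\<Sum>i\<in>I. d i)" w] \<open>n > 0\<close>
    by (simp add: n_def power_divide power_mult_distrib)
qed

lemma unbiased_compressor_error:
  assumes "unbiased_compressor M C om"
  shows "integrable M (\<lambda>s. C s v - v)"
    and "(\<integral>s. C s v - v \<partial>M) = 0"
    and "integrable M (\<lambda>s. (norm (C s v - v))\<^sup>2)"
    and "(\<integral>s. (norm (C s v - v))\<^sup>2 \<partial>M) \<le> om * (norm v)\<^sup>2"
proof -
  interpret prob_space M
    using assms unfolding unbiased_compressor_def by blast
  have C: "integrable M (\<lambda>s. C s v)" "(\<integral>s. C s v \<partial>M) = v"
    using assms unfolding unbiased_compressor_def by auto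
  show "integrable M (\<lambda>s. C s v - v)"
    using C(1) by simp
  show "(\<integral>s. C s v - v \<partial>M) = 0"
    using C by (simp add: Bochner_Integration.integral_diff prob_space)
  show "integrable M (\<lambda>s. (norm (C s v - v))\<^sup>2)"
    and "(\<integral>s. (norm (C s v - v))\<^sup>2 \<partial>M) \<le> om * (norm v)\<^sup>2"
    using assms unfolding unbiased_compressor_def by auto
qed

context product_prob_space
begin

lemma integral_PiM_prod_subset:
  fixes f :: "'i \<Rightarrow> 'a \<Rightarrow> real"
  assumes "finite I" "J \<subseteq> I" "\<And>j. j \<in> J \<Longrightarrow> integrable (M j) (f j)"
  shows "integrable (PiM I M) (\<lambda>x. \<Prod>j\<in>J. f j (x j))"
    and "(\<integral>x. (\<Prod>j\<in>J. f j (x j)) \<partial>PiM I M) = (\<Prod>j\<in>J. integral\<^sup>L (M j) (f j))"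
proof -
  define g where "g j x = (if j \<in> J then f j x else 1)" for j x
  have int_g: "integrable (M i) (g i)" for i
    using assms(3) by (cases "i \<in> J") (simp_all add: g_def[abs_def])
  have "integral\<^sup>L (M i) (g i) = (if i \<in> J then integral\<^sup>L (M i) (f i) else 1)" for i
    by (simp add: g_def[abs_def] prob_space.prob_space[OF prob_space])
  then have "(\<Prod>i\<in>I. integral\<^sup>L (M i) (g i)) = (\<Prod>j\<in>J. integral\<^sup>L (M j) (f j))"
    using assms(1,2) by (simp add: prod.If_cases Int_absorb1 flip: Int_def)
  moreover have "(\<Prod>i\<in>I. g i (x i)) = (\<Prod>j\<in>J. f j (x j))" for x
    using assms(1,2) by (simp add: g_def prod.If_cases Int_absorb1 flip: Int_def)
  ultimately show "integrable (PiM I M) (\<lambda>x. \<Prod>j\<in>J. f j (x j))"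
    and "(\<integral>x. (\<Prod>j\<in>J. f j (x j)) \<partial>PiM I M) = (\<Prod>j\<in>J. integral\<^sup>L (M j) (f j))"
    using product_integrable_prod[OF assms(1), of g] product_integral_prod[OF assms(1), of g]
      int_g
    by simp_all
qed

lemma integral_PiM_inner_components:
  fixes f g :: "'a \<Rightarrow> 'b::euclidean_space"
  assumes "finite I" "i \<in> I" "j \<in> I" "i \<noteq> j" "integrable (M i) f" "integrable (M j) g"
  shows "integrable (PiM I M) (\<lambda>x. f (x i) \<bullet> g (x j))"
    and "(\<integral>x. f (x i) \<bullet> g (x j) \<partial>PiM I M) = integral\<^sup>L (M i) f \<bullet> integral\<^sup>L (M j) g"
proof -
  define h where "h b k s = (if k = i then f s \<bullet> b else g s \<bullet> b)" for b k s
  have int_h: "integrable (M k) (h b k)" if "k \<in> {i, j}" for b k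
    using that assms(4,5,6) by (auto simp: h_def[abs_def])
  have "{i, j} \<subseteq> I"
    using assms(2,3) by simp
  have coordinate: "integrable (PiM I M) (\<lambda>x. (f (x i) \<bullet> b) * (g (x j) \<bullet> b))
      \<and> (\<integral>x. (f (x i) \<bullet> b) * (g (x j) \<bullet> b) \<partial>PiM I M)
        = (integral\<^sup>L (M i) f \<bullet> b) * (integral\<^sup>L (M j) g \<bullet> b)" for b
    using integral_PiM_prod_subset[OF assms(1) \<open>{i, j} \<subseteq> I\<close> int_h[of _ b]] assms(4,5,6)
    by (simp add: h_def[abs_def])
  have "f (x i) \<bullet> g (x j) = (\<Sum>b\<in>Basis. (f (x i) \<bullet> b) * (g (x j) \<bullet> b))" for x
    by (rule euclidean_inner)
  moreover have "integral\<^sup>L (M i) f \<bullet> integral\<^sup>L (M j) g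
      = (\<Sum>b\<in>Basis. (integral\<^sup>L (M i) f \<bullet> b) * (integral\<^sup>L (M j) g \<bullet> b))"
    by (rule euclidean_inner)
  ultimately show "integrable (PiM I M) (\<lambda>x. f (x i) \<bullet> g (x j))"
    and "(\<integral>x. f (x i) \<bullet> g (x j) \<partial>PiM I M) = integral\<^sup>L (M i) f \<bullet> integral\<^sup>L (M j) g"
    using coordinate by (simp_all add: integral_sum)
qed

lemma integral_PiM_inner_self_component:
  fixes f :: "'a \<Rightarrow> 'b::real_inner"
  assumes "finite I" "i \<in> I" "integrable (M i) (\<lambda>s. (norm (f s))\<^sup>2)"
  shows "integrable (PiM I M) (\<lambda>x. f (x i) \<bullet> f (x i))"
    and "(\<integral>x. f (x i) \<bullet> f (x i) \<partial>PiM I M) = (\<integral>s. (norm (f s))\<^sup>2 \<partial>M i)"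
  using integral_PiM_prod_subset[of "{i}" "\<lambda>_ s. (norm (f s))\<^sup>2"] assms
  by (simp_all add: power2_norm_eq_inner)


lemma integral_PiM_norm_sum_centered:
  fixes X :: "'i \<Rightarrow> 'a \<Rightarrow> 'b::euclidean_space"
  assumes "finite I"
    and int: "\<And>i. i \<in> I \<Longrightarrow> integrable (M i) (X i)"
    and int_norm: "\<And>i. i \<in> I \<Longrightarrow> integrable (M i) (\<lambda>s. (norm (X i s))\<^sup>2)"
    and centered: "\<And>i. i \<in> I \<Longrightarrow> (\<integral>s. X i s \<partial>M i) = 0"
  shows "integrable (PiM I M) (\<lambda>x. (norm (\<Sum>i\<in>I. X i (x i)))\<^sup>2)"
    and "(\<integral>x. (norm (\<Sum>i\<in>I. X i (x i)))\<^sup>2 \<partial>PiM I M)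
      = (\<Sum>i\<in>I. \<integral>s. (norm (X i s))\<^sup>2 \<partial>M i)"
proof -
  have pair: "integrable (PiM I M) (\<lambda>x. X i (x i) \<bullet> X j (x j))
      \<and> (\<integral>x. X i (x i) \<bullet> X j (x j) \<partial>PiM I M)
        = (if i = j then \<integral>s. (norm (X i s))\<^sup>2 \<partial>M i else 0)"
    if "i \<in> I" "j \<in> I" for i j
    using that integral_PiM_inner_self_component[OF assms(1) that(1) int_norm[OF that(1)]]
      integral_PiM_inner_components[OF assms(1) that _ int[OF that(1)] int[OF that(2)]] centered
    by (cases "i = j") auto
  have expand: "(norm (\<Sum>i\<in>I. X i (x i)))\<^sup>2 = (\<Sum>i\<in>I. \<Sum>j\<in>I. X i (x i) \<bullet> X j (x j))" for x
    by (simp add: power2_norm_eq_inner inner_sum_left inner_sum_right) (rule sum.swap)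
  show "integrable (PiM I M) (\<lambda>x. (norm (\<Sum>i\<in>I. X i (x i)))\<^sup>2)"
    unfolding expand using pair by (intro Bochner_Integration.integrable_sum) auto
  have "(\<integral>x. (norm (\<Sum>i\<in>I. X i (x i)))\<^sup>2 \<partial>PiM I M)
      = (\<Sum>i\<in>I. \<Sum>j\<in>I. \<integral>x. X i (x i) \<bullet> X j (x j) \<partial>PiM I M)"
    unfolding expand using pair
    by (simp add: Bochner_Integration.integral_sum Bochner_Integration.integrable_sum)
  also have "\<dots> = (\<Sum>i\<in>I. \<integral>s. (norm (X i s))\<^sup>2 \<partial>M i)"
    using pair assms(1) by (simp add: sum.delta cong: sum.cong)
  finally show "(\<integral>x. (norm (\<Sum>i\<in>I. X i (x i)))\<^sup>2 \<partial>PiM I M)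
      = (\<Sum>i\<in>I. \<integral>s. (norm (X i s))\<^sup>2 \<partial>M i)" .
qed

end

lemma shared_compression_gradient_error:
  assumes "L_smooth_grad g L" "unbiased_compressor M C om"
  shows "(\<integral>s. (norm (g (H + C s (w - H)) - g w))\<^sup>2 \<partial>M)
    \<le> L\<^sup>2 * om * (norm (w - H))\<^sup>2"
proof -
  define v where "v = w - H"
  have pointwise: "(norm (g (H + C s v) - g w))\<^sup>2 \<le> L\<^sup>2 * (norm (C s v - v))\<^sup>2" for s
    using L_smooth_grad_sq[OF assms(1), of "H + C s v" w] by (simp add: v_def algebra_simps)
  have "(\<integral>s. (norm (g (H + C s v) - g w))\<^sup>2 \<partial>M)
      \<le> (\<integral>s. L\<^sup>2 * (norm (C s v - v))\<^sup>2 \<partial>M)"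
    using pointwise unbiased_compressor_error(3)[OF assms(2)] by (intro integral_mono') auto
  also have "\<dots> = L\<^sup>2 * (\<integral>s. (norm (C s v - v))\<^sup>2 \<partial>M)"
    by simp
  also have "\<dots> \<le> L\<^sup>2 * (om * (norm v)\<^sup>2)"
    using unbiased_compressor_error(4)[OF assms(2)] by (intro mult_left_mono) auto
  finally show ?thesis
    by (simp add: v_def mult.assoc)
qed

lemma independent_compression_gradient_error:
  fixes g :: "'a::euclidean_space \<Rightarrow> 'a" and M :: "'i \<Rightarrow> 's measure"
    and C :: "'i \<Rightarrow> 's \<Rightarrow> 'a \<Rightarrow> 'a"
  assumes "finite I" "I \<noteq> {}" "linear A" "\<And>x. g x = A (x - c)" "L_smooth_grad g L"
    and compressor: "\<And>i. i \<in> I \<Longrightarrow> unbiased_compressor (M i) (C i) om"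
  shows "(\<integral>\<omega>. (norm ((1 / real (card I)) *\<^sub>R (\<Sum>i\<in>I. g (H i + C i (\<omega> i) (w - H i))) - g w))\<^sup>2
      \<partial>PiM I M)
    \<le> L\<^sup>2 * om / real (card I) * ((1 / real (card I)) * (\<Sum>i\<in>I. (norm (w - H i))\<^sup>2))"
proof -
  define n where "n = real (card I)"
  \<comment> \<open>The locale needs a probability space at every index; factors outside I
    do not affect PiM I.\<close>
  define M' where "M' i = (if i \<in> I then M i else return (count_space UNIV) undefined)" for i
  interpret product_prob_space M'
    by (rule product_prob_spaceI)
      (use compressor in \<open>auto simp: M'_def unbiased_compressor_def intro: prob_space_return\<close>)
  have PiM_eq: "PiM I M = PiM I M'"
    by (rule PiM_cong) (auto simp: M'_def)
  define X where "X i s = C i s (w - H i) - (w - H i)" for i s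
  have err: "integrable (M' i) (X i)" "(\<integral>s. X i s \<partial>M' i) = 0"
    "integrable (M' i) (\<lambda>s. (norm (X i s))\<^sup>2)"
    "(\<integral>s. (norm (X i s))\<^sup>2 \<partial>M' i) \<le> om * (norm (w - H i))\<^sup>2"
    if "i \<in> I" for i
    using unbiased_compressor_error[OF compressor[OF that]] that
    by (simp_all add: X_def[abs_def] M'_def)
  note sum_centered = integral_PiM_norm_sum_centered[OF assms(1) err(1) err(3) err(2)]
  have pointwise: "(norm ((1 / n) *\<^sub>R (\<Sum>i\<in>I. g (H i + C i (\<omega> i) (w - H i))) - g w))\<^sup>2
      \<le> (L / n)\<^sup>2 * (norm (\<Sum>i\<in>I. X i (\<omega> i)))\<^sup>2" for \<omega>
    using affine_gradient_average_error[OF assms(1-5), of w "\<lambda>i. X i (\<omega> i)"]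
    by (simp add: n_def X_def algebra_simps)
  have "(\<integral>\<omega>. (norm ((1 / n) *\<^sub>R (\<Sum>i\<in>I. g (H i + C i (\<omega> i) (w - H i))) - g w))\<^sup>2 \<partial>PiM I M')
      \<le> (\<integral>\<omega>. (L / n)\<^sup>2 * (norm (\<Sum>i\<in>I. X i (\<omega> i)))\<^sup>2 \<partial>PiM I M')"
    using pointwise sum_centered(1) by (intro integral_mono') auto
  also have "\<dots> = (L / n)\<^sup>2 * (\<Sum>i\<in>I. \<integral>s. (norm (X i s))\<^sup>2 \<partial>M' i)"
    using sum_centered(2) by simp
  also have "\<dots> \<le> (L / n)\<^sup>2 * (\<Sum>i\<in>I. om * (norm (w - H i))\<^sup>2)"
    using err(4) by (intro mult_left_mono sum_mono) auto
  also have "\<dots> = L\<^sup>2 * om / n * ((1 / n) * (\<Sum>i\<in>I. (norm (w - H i))\<^sup>2))"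
    by (simp add: sum_distrib_left[symmetric] power_divide power2_eq_square)
  finally show ?thesis
    unfolding PiM_eq n_def .
qed

theorem mainTheorem10:
  fixes F :: "'a::euclidean_space \<Rightarrow> real"
    and gradF :: "'a \<Rightarrow> 'a"
    and A :: "'a \<Rightarrow> 'a" and wstar :: 'a
    and L omega_dwn :: real and N :: nat
    and w :: 'a
    and H :: "nat \<Rightarrow> 'a"
    and M :: "nat \<Rightarrow> 's measure" and C :: "nat \<Rightarrow> 's \<Rightarrow> 'a \<Rightarrow> 'a"
    and Hs :: 'a
    and Ms :: "'t measure" and Cs :: "'t \<Rightarrow> 'a \<Rightarrow> 'a"
  assumes N_pos: "N \<ge> 1"
    and A_lin: "linear A"
    and A_sym: "\<forall>x y. A x \<bullet> y = x \<bullet> A y"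
    and F_quad: "\<forall>v. F v - F wstar = 1/2 * ((v - wstar) \<bullet> A (v - wstar))"
    and grad: "\<forall>x. (F has_derivative (\<lambda>h. gradF x \<bullet> h)) (at x)"
    and smooth: "L_smooth_grad gradF L"
    and om_pos: "omega_dwn > 0"
    and comp_rand: "\<forall>i<N. unbiased_compressor (M i) (C i) omega_dwn"
    and comp_shared: "unbiased_compressor Ms Cs omega_dwn"
  shows
    \<comment> \<open>Rand-MCM: independent downlink compressions, one memory per worker (bold C = N)\<close>
    "((\<integral>\<omega>. (norm ((1 / real N) *\<^sub>R (\<Sum>i<N. gradF (H i + C i (\<omega> i) (w - H i))) - gradF w))\<^sup>2
        \<partial>(PiM {..<N} M))
      \<le> L\<^sup>2 * omega_dwn / real N * ((1 / real N) * (\<Sum>i<N. (norm (w - H i))\<^sup>2)))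
    \<and>
    \<comment> \<open>MCM: one shared memory and one shared downlink compression (bold C = 1)\<close>
    ((\<integral>s. (norm ((1 / real N) *\<^sub>R (\<Sum>i<N. gradF (Hs + Cs s (w - Hs))) - gradF w))\<^sup>2 \<partial>Ms)
      \<le> L\<^sup>2 * omega_dwn / 1 * ((1 / real N) * (\<Sum>i<N. (norm (w - Hs))\<^sup>2)))"
proof -
  have gradient: "gradF x = A (x - wstar)" for x
    using gradient_of_quadratic[OF A_lin _ _ grad[rule_format]] A_sym F_quad by blast
  have "{..<N} \<noteq> {}"
    using N_pos by (simp add: lessThan_empty_iff)
  have "(\<integral>\<omega>. (norm ((1 / real N) *\<^sub>R (\<Sum>i<N. gradF (H i + C i (\<omega> i) (w - H i))) - gradF w))\<^sup>2
        \<partial>(PiM {..<N} M))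
      \<le> L\<^sup>2 * omega_dwn / real N * ((1 / real N) * (\<Sum>i<N. (norm (w - H i))\<^sup>2))"
    using independent_compression_gradient_error
        [OF finite_lessThan \<open>{..<N} \<noteq> {}\<close> A_lin gradient smooth, of M C omega_dwn H w]
      comp_rand
    by simp
  moreover have "(\<integral>s. (norm ((1 / real N) *\<^sub>R (\<Sum>i<N. gradF (Hs + Cs s (w - Hs))) - gradF w))\<^sup>2 \<partial>Ms)
      \<le> L\<^sup>2 * omega_dwn / 1 * ((1 / real N) * (\<Sum>i<N. (norm (w - Hs))\<^sup>2))"
    using shared_compression_gradient_error[OF smooth comp_shared, of Hs w] N_pos
    by (simp add: sum_constant_scaleR)
  ultimately show ?thesis ..
qed

end
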